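(* If $\mathcal{O}$ is a strongly decomposable set of upwards closed modalities, then $\mathcal{O}$ is decomposable.
   Context: $\Sigma$ is a signature of effect operations with arities $\alpha^n\to\alpha$, $\mathbf{N}\times\alpha^n\to\alpha$, $\alpha^{\mathbf{N}}\to\alpha$ or $\mathbf{N}\times\alpha^{\mathbf{N}}\to\alpha$. $TX$ is the set of possibly infinite labelled trees with leaves $\bot$ or elements of $X$ and internal nodes labelled by operations (or $\sigma_m$, $m\in\mathbb{N}$) with children according to arity; $t\le t'$ iff $t$ is obtained from $t'$ by replacing subtrees with $\bot$. $\mu:TTX\to TX$ replaces each leaf of a tree of trees by that tree. $\mathbf{1}=\{*\}$. A set $\mathcal{O}$ of modalities is given with $[\![o]\!]\subseteq T\mathbf{1}$; upwards closed means $[\![o]\!]$ is upward closed under $\le$. $t[\in P]\in T\mathbf{1}$ replaces leaves in $P$ by $*$ and other $X$-leaves by $\bot$; $o(A)=\{t\in TX\mid t[\in A]\in[\![o]\!]\}$. $\mathcal{T}$ is the least class of formulas containing $o(\top),o(\bot)$ ($o\in\mathcal{O}$) closed under arbitrary $\bigvee,\bigwedge$, with $[\![o(\top)]\!]=o(\{*\})$, $[\![o(\bot)]\!]=o(\emptyset)$, unions/intersections. $t\trianglelefteq t'$ iff $\forall\Phi\in\mathcal{T}$, $t\in[\![\Phi]\!]\Rightarrow t'\in[\![\Phi]\!]$; for $r,r'\in TT\mathbf{1}$, $r\preccurlyeq r'$ iff $\forall o\,\forall\Phi\in\mathcal{T}$, $r\in o([\![\Phi]\!])\Rightarrow r'\in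 o([\![\Phi]\!])$. $\mathcal{O}$ is decomposable if $r\preccurlyeq r'$ implies $\mu r\trianglelefteq\mu r'$. $\mathcal{O}$ is strongly decomposable if for every $r\in TT\mathbf{1}$ and $o\in\mathcal{O}$ with $\mu r\in o(\{*\})$ there is a collection $\{(o_i,o_i')\}_{i\in I}$ of pairs of modalities in $\mathcal{O}$ such that (1) $r\in o_i(o_i'(\{*\}))$ for all $i\in I$, and (2) for every $r'\in TT\mathbf{1}$, if $r'\in o_i(o_i'(\{*\}))$ for all $i\in I$ then $\mu r'\in o(\{*\})$. *)

theory Defs
  imports "HOL-Library.BNF_Corec" "HOL-Library.Extended_Nat"
begin

text \<open>Node labels are of an abstract type 'l (operations of
the signature, together with their natural-number parameter if any, and the
labels sigma_m); each label l has arity ar l :: enat (finite n, or infinity for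
countably many children).  Children of a node are indexed by nat; in a
well-formed tree the children at indices >= ar l are Bot (padding).\<close>

codatatype ('l, 'x) tree = Bot | Leaf 'x | Node 'l "nat \<Rightarrow> ('l, 'x) tree"

text \<open>Well-formed trees with leaves in X: this is the set TX (for the carrier X).\<close>
coinductive wft :: "('l \<Rightarrow> enat) \<Rightarrow> 'x set \<Rightarrow> ('l, 'x) tree \<Rightarrow> bool"
  for ar :: "'l \<Rightarrow> enat" and X :: "'x set" where
  wft_Bot: "wft ar X Bot"
| wft_Leaf: "x \<in> X \<Longrightarrow> wft ar X (Leaf x)"
| wft_Node: "(\<forall>i. (enat i < ar l \<longrightarrow> wft ar X (f i)) \<and> (ar l \<le> enat i \<longrightarrow> f i = Bot))
      \<Longrightarrow> wft ar X (Node l f)"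

definition T1 :: "('l \<Rightarrow> enat) \<Rightarrow> ('l, unit) tree set" where
  "T1 ar = {t. wft ar UNIV t}"

coinductive tree_le :: "('l, 'x) tree \<Rightarrow> ('l, 'x) tree \<Rightarrow> bool" where
  le_Bot: "tree_le Bot t"
| le_Leaf: "tree_le (Leaf x) (Leaf x)"
| le_Node: "(\<forall>i. tree_le (f i) (g i)) \<Longrightarrow> tree_le (Node l f) (Node l g)"

corec mu :: "('l, ('l, 'x) tree) tree \<Rightarrow> ('l, 'x) tree" where
  "mu r = (case r of Bot \<Rightarrow> Bot | Leaf t \<Rightarrow> t | Node l f \<Rightarrow> Node l (\<lambda>i. mu (f i)))"

primcorec restr :: "'x set \<Rightarrow> ('l, 'x) tree \<Rightarrow> ('l, unit) tree" where
  "restr P t = (case t of Bot \<Rightarrow> Bot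
                 | Leaf x \<Rightarrow> (if x \<in> P then Leaf () else Bot)
                 | Node l f \<Rightarrow> Node l (\<lambda>i. restr P (f i)))"

definition mod_set :: "('l \<Rightarrow> enat) \<Rightarrow> ('m \<Rightarrow> ('l, unit) tree set) \<Rightarrow> 'x set \<Rightarrow> 'm
    \<Rightarrow> 'x set \<Rightarrow> ('l, 'x) tree set" where
  "mod_set ar sem X om A = {t. wft ar X t \<and> restr A t \<in> sem om}"

text \<open>Denotations [[\<Phi>]] of the formulas \<Phi> of the logic \<T> (least class containing o(top), o(bot)
closed under arbitrary disjunctions and conjunctions); conjunctions are interpreted
inside T1 (so the empty conjunction denotes T1).\<close>
inductive_set formula_den :: "('l \<Rightarrow> enat) \<Rightarrow> ('m \<Rightarrow> ('l, unit) tree set)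
    \<Rightarrow> ('l, unit) tree set set"
  for ar :: "'l \<Rightarrow> enat" and sem :: "'m \<Rightarrow> ('l, unit) tree set" where
  fd_top: "mod_set ar sem UNIV om {()} \<in> formula_den ar sem"
| fd_bot: "mod_set ar sem UNIV om {} \<in> formula_den ar sem"
| fd_Sup: "\<forall>D \<in> S. D \<in> formula_den ar sem \<Longrightarrow> \<Union>S \<in> formula_den ar sem"
| fd_Inf: "\<forall>D \<in> S. D \<in> formula_den ar sem \<Longrightarrow> T1 ar \<inter> \<Inter>S \<in> formula_den ar sem"

definition formula_pre :: "('l \<Rightarrow> enat) \<Rightarrow> ('m \<Rightarrow> ('l, unit) tree set)
    \<Rightarrow> ('l, unit) tree \<Rightarrow> ('l, unit) tree \<Rightarrow> bool" where
  "formula_pre ar sem t t' \<longleftrightarrow> (\<forall>D \<in> formula_den ar sem. t \<in> D \<longrightarrow> t' \<in> D)"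

definition tt_pre :: "('l \<Rightarrow> enat) \<Rightarrow> ('m \<Rightarrow> ('l, unit) tree set)
    \<Rightarrow> ('l, ('l, unit) tree) tree \<Rightarrow> ('l, ('l, unit) tree) tree \<Rightarrow> bool" where
  "tt_pre ar sem r r' \<longleftrightarrow> (\<forall>om. \<forall>D \<in> formula_den ar sem.
      r \<in> mod_set ar sem (T1 ar) om D \<longrightarrow> r' \<in> mod_set ar sem (T1 ar) om D)"

definition upwards_closed :: "('l \<Rightarrow> enat) \<Rightarrow> ('m \<Rightarrow> ('l, unit) tree set) \<Rightarrow> bool" where
  "upwards_closed ar sem \<longleftrightarrow>
     (\<forall>om t t'. t \<in> sem om \<longrightarrow> tree_le t t' \<longrightarrow> t' \<in> T1 ar \<longrightarrow> t' \<in> sem om)"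

definition decomposable :: "('l \<Rightarrow> enat) \<Rightarrow> ('m \<Rightarrow> ('l, unit) tree set) \<Rightarrow> bool" where
  "decomposable ar sem \<longleftrightarrow>
     (\<forall>r r'. wft ar (T1 ar) r \<longrightarrow> wft ar (T1 ar) r' \<longrightarrow> tt_pre ar sem r r'
        \<longrightarrow> formula_pre ar sem (mu r) (mu r'))"

definition strongly_decomposable :: "('l \<Rightarrow> enat) \<Rightarrow> ('m \<Rightarrow> ('l, unit) tree set) \<Rightarrow> bool" where
  "strongly_decomposable ar sem \<longleftrightarrow>
     (\<forall>r om. wft ar (T1 ar) r \<longrightarrow> mu r \<in> mod_set ar sem UNIV om {()} \<longrightarrow>
        (\<exists>C :: ('m \<times> 'm) set.
           (\<forall>(oi, oi') \<in> C. r \<in> mod_set ar sem (T1 ar) oi (mod_set ar sem UNIV oi' {()})) \<and>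
           (\<forall>r'. wft ar (T1 ar) r' \<longrightarrow>
              (\<forall>(oi, oi') \<in> C. r' \<in> mod_set ar sem (T1 ar) oi (mod_set ar sem UNIV oi' {()}))
              \<longrightarrow> mu r' \<in> mod_set ar sem UNIV om {()})))"

end

theory Submission
  imports Defs
begin

text \<open>
  Atomic formulas o(top) are handled directly by strong decomposability: the pairs
  (o_i, o_i') it provides for r are formulas o_i(o_i'(top)) satisfied by r, hence by r',
  and together they force mu r' into o(top).  For o(bot) one erases all leaves of the
  inner trees, e = restr {}: an inner tree t lies in o'(bot) exactly when e t lies in
  o'(top), and mu commutes with e, so the case o(bot) for r, r' becomes the case o(top)
  for the erased trees.  Arbitrary conjunctions and disjunctions preserve the
  implication.
\<close>

lemma tree_eq_coinduct:
  assumes "R x y"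
    and step: "\<And>x y. R x y \<Longrightarrow> x = y \<or> (\<exists>a. x = Leaf a \<and> y = Leaf a)
       \<or> (\<exists>l f g. x = Node l f \<and> y = Node l g \<and> (\<forall>i. R (f i) (g i)))"
  shows "x = y"
  using assms(1)
proof (coinduction arbitrary: x y rule: tree.coinduct_strong)
  case (Eq_tree x y)
  from step[OF Eq_tree] consider "x = y" | "\<exists>a. x = Leaf a \<and> y = Leaf a"
    | "\<exists>l f g. x = Node l f \<and> y = Node l g \<and> (\<forall>i. R (f i) (g i))" by blast
  then show ?case
    by cases (auto simp: rel_fun_def)
qed

lemma restr_simps [simp]:
  "restr P Bot = Bot"
  "restr P (Leaf x) = (if x \<in> P then Leaf () else Bot)"
  "restr P (Node l f) = Node l (\<lambda>i. restr P (f i))"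
  by (subst restr.code; simp)+

lemma mu_simps [simp]:
  "mu Bot = Bot"
  "mu (Leaf t) = t"
  "mu (Node l f) = Node l (\<lambda>i. mu (f i))"
  by (subst mu.code; simp)+

lemma wft_mu:
  assumes "wft ar {t. wft ar X t} r" shows "wft ar X (mu r)"
  using assms
proof (coinduction arbitrary: r rule: wft.coinduct)
  case (wft r)
  then show ?case
    by cases (auto elim: wft.cases)
qed

lemma wft_restr:
  assumes "wft ar X t" shows "wft ar UNIV (restr P t)"
  using assms
proof (coinduction arbitrary: t rule: wft.coinduct)
  case (wft t)
  then show ?case
    by cases auto
qed

lemma wft_map_tree:
  assumes "wft ar X t" and "g ` X \<subseteq> Y" shows "wft ar Y (map_tree id g t)"
  using assms(1)
proof (coinduction arbitrary: t rule: wft.coinduct)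
  case (wft t)
  then show ?case
    by cases (use assms(2) in auto)
qed

lemma restr_restr_empty: "restr A (restr {} t) = restr {} (t :: ('l, 'x) tree)"
proof (rule tree_eq_coinduct[where
    R = "\<lambda>x y. \<exists>t :: ('l, 'x) tree. x = restr A (restr {} t) \<and> y = restr {} t"])
  fix x y assume "\<exists>t :: ('l, 'x) tree. x = restr A (restr {} t) \<and> y = restr {} t"
  then obtain t :: "('l, 'x) tree" where "x = restr A (restr {} t)" "y = restr {} t" by blast
  then show "x = y \<or> (\<exists>a. x = Leaf a \<and> y = Leaf a) \<or> (\<exists>l f g. x = Node l f \<and> y = Node l g
      \<and> (\<forall>i. \<exists>t :: ('l, 'x) tree. f i = restr A (restr {} t) \<and> g i = restr {} t))"
    by (cases t) auto
qed blast

lemma mu_map_restr: "mu (map_tree id (restr P) r) = restr P (mu r)"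
proof (rule tree_eq_coinduct[where
    R = "\<lambda>x y. \<exists>r. x = mu (map_tree id (restr P) r) \<and> y = restr P (mu r)"])
  fix x y assume "\<exists>r. x = mu (map_tree id (restr P) r) \<and> y = restr P (mu r)"
  then obtain r where "x = mu (map_tree id (restr P) r)" "y = restr P (mu r)" by blast
  then show "x = y \<or> (\<exists>a. x = Leaf a \<and> y = Leaf a) \<or> (\<exists>l f g. x = Node l f \<and> y = Node l g
      \<and> (\<forall>i. \<exists>r. f i = mu (map_tree id (restr P) r) \<and> g i = restr P (mu r)))"
    by (cases r) auto
qed blast

lemma restr_map_tree: "restr A (map_tree id g t) = restr (g -` A) t"
proof (rule tree_eq_coinduct[where
    R = "\<lambda>x y. \<exists>t. x = restr A (map_tree id g t) \<and> y = restr (g -` A) t"])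
  fix x y assume "\<exists>t. x = restr A (map_tree id g t) \<and> y = restr (g -` A) t"
  then obtain t where "x = restr A (map_tree id g t)" "y = restr (g -` A) t" by blast
  then show "x = y \<or> (\<exists>a. x = Leaf a \<and> y = Leaf a) \<or> (\<exists>l f h. x = Node l f \<and> y = Node l h
      \<and> (\<forall>i. \<exists>t. f i = restr A (map_tree id g t) \<and> h i = restr (g -` A) t))"
    by (cases t) auto
qed blast

lemma restr_cong:
  assumes "wft ar X t" and "A \<inter> X = B \<inter> X" shows "restr A t = restr B t"
proof (rule tree_eq_coinduct[where
    R = "\<lambda>x y. \<exists>t. x = restr A t \<and> y = restr B t \<and> wft ar X t"])
  fix x y assume "\<exists>t. x = restr A t \<and> y = restr B t \<and> wft ar X t"
  then obtain t where xy: "x = restr A t" "y = restr B t" and wt: "wft ar X t" by blast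
  from wt show "x = y \<or> (\<exists>a. x = Leaf a \<and> y = Leaf a) \<or> (\<exists>l f g. x = Node l f \<and> y = Node l g
      \<and> (\<forall>i. \<exists>t. f i = restr A t \<and> g i = restr B t \<and> wft ar X t))"
  proof cases
    case (wft_Node l f)
    then have "\<forall>i. wft ar X (f i)" by (metis not_le wft_Bot)
    with xy wft_Node(1) show ?thesis by auto
  qed (use xy assms(2) in auto)
qed (use assms(1) in blast)

lemma restr_empty_in_mod_set_iff:
  assumes "wft ar X t"
  shows "restr {} t \<in> mod_set ar sem UNIV om {()} \<longleftrightarrow> t \<in> mod_set ar sem X om {}"
  using assms wft_restr[OF assms] by (simp add: mod_set_def restr_restr_empty)

lemma map_restr_empty_in_mod_set_iff:
  assumes "wft ar (T1 ar) r"
  shows "map_tree id (restr {}) r \<in> mod_set ar sem (T1 ar) oi (mod_set ar sem UNIV oi' {()})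
    \<longleftrightarrow> r \<in> mod_set ar sem (T1 ar) oi (mod_set ar sem UNIV oi' {})"
proof -
  have "restr {} -` mod_set ar sem UNIV oi' {()} \<inter> T1 ar = mod_set ar sem UNIV oi' {} \<inter> T1 ar"
    using restr_empty_in_mod_set_iff[where X = UNIV and sem = sem] by (auto simp: T1_def)
  then have "restr (mod_set ar sem UNIV oi' {()}) (map_tree id (restr {}) r)
      = restr (mod_set ar sem UNIV oi' {}) r"
    unfolding restr_map_tree by (rule restr_cong[OF assms])
  moreover have "wft ar (T1 ar) (map_tree id (restr {}) r)"
    by (rule wft_map_tree[OF assms]) (auto simp: T1_def intro: wft_restr)
  ultimately show ?thesis
    using assms by (simp add: mod_set_def)
qed

lemma strongly_decomposable_transfer_top:
  fixes sem :: "'m \<Rightarrow> ('l, unit) tree set"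
  assumes "strongly_decomposable ar sem" and "wft ar (T1 ar) r" and "wft ar (T1 ar) r'"
    and preserved: "\<And>oi oi'. r \<in> mod_set ar sem (T1 ar) oi (mod_set ar sem UNIV oi' {()})
      \<Longrightarrow> r' \<in> mod_set ar sem (T1 ar) oi (mod_set ar sem UNIV oi' {()})"
    and "mu r \<in> mod_set ar sem UNIV om {()}"
  shows "mu r' \<in> mod_set ar sem UNIV om {()}"
proof -
  obtain C :: "('m \<times> 'm) set" where
    r_in: "\<forall>(oi, oi') \<in> C. r \<in> mod_set ar sem (T1 ar) oi (mod_set ar sem UNIV oi' {()})" and
    sufficient: "\<forall>q. wft ar (T1 ar) q \<longrightarrow>
      (\<forall>(oi, oi') \<in> C. q \<in> mod_set ar sem (T1 ar) oi (mod_set ar sem UNIV oi' {()}))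
      \<longrightarrow> mu q \<in> mod_set ar sem UNIV om {()}"
    using assms(1,2,5) unfolding strongly_decomposable_def by meson
  from r_in preserved
  have "\<forall>(oi, oi') \<in> C. r' \<in> mod_set ar sem (T1 ar) oi (mod_set ar sem UNIV oi' {()})"
    by auto
  with sufficient assms(3) show ?thesis by auto
qed

lemma strongly_decomposable_transfer_bot:
  fixes sem :: "'m \<Rightarrow> ('l, unit) tree set"
  assumes sd: "strongly_decomposable ar sem" and wr: "wft ar (T1 ar) r" and wr': "wft ar (T1 ar) r'"
    and preserved: "\<And>oi oi'. r \<in> mod_set ar sem (T1 ar) oi (mod_set ar sem UNIV oi' {})
      \<Longrightarrow> r' \<in> mod_set ar sem (T1 ar) oi (mod_set ar sem UNIV oi' {})"
    and "mu r \<in> mod_set ar sem UNIV om {}"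
  shows "mu r' \<in> mod_set ar sem UNIV om {}"
proof -
  let ?erase = "map_tree id (restr {}) :: ('l, ('l, unit) tree) tree \<Rightarrow> _"
  have wft_erase: "wft ar (T1 ar) (?erase q)" if "wft ar (T1 ar) q" for q
    using that by (rule wft_map_tree) (auto simp: T1_def intro: wft_restr)
  have wft_mu_T1: "wft ar UNIV (mu q)" if "wft ar (T1 ar) q" for q :: "('l, ('l, unit) tree) tree"
    using that by (simp add: T1_def wft_mu)
  have "mu (?erase r') \<in> mod_set ar sem UNIV om {()}"
  proof (rule strongly_decomposable_transfer_top[OF sd wft_erase[OF wr] wft_erase[OF wr']])
    show "?erase r' \<in> mod_set ar sem (T1 ar) oi (mod_set ar sem UNIV oi' {()})"
      if "?erase r \<in> mod_set ar sem (T1 ar) oi (mod_set ar sem UNIV oi' {()})" for oi oi'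
      using that preserved by (simp add: map_restr_empty_in_mod_set_iff wr wr')
    show "mu (?erase r) \<in> mod_set ar sem UNIV om {()}"
      using assms(5) by (simp add: mu_map_restr restr_empty_in_mod_set_iff[OF wft_mu_T1[OF wr]])
  qed
  then show ?thesis
    by (simp add: mu_map_restr restr_empty_in_mod_set_iff[OF wft_mu_T1[OF wr']])
qed

lemma formula_preI:
  assumes "wft ar UNIV t'"
    and "\<And>om. t \<in> mod_set ar sem UNIV om {()} \<Longrightarrow> t' \<in> mod_set ar sem UNIV om {()}"
    and "\<And>om. t \<in> mod_set ar sem UNIV om {} \<Longrightarrow> t' \<in> mod_set ar sem UNIV om {}"
  shows "formula_pre ar sem t t'"
  unfolding formula_pre_def
proof
  fix D assume "D \<in> formula_den ar sem"
  then show "t \<in> D \<longrightarrow> t' \<in> D"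
    by induction (use assms in \<open>auto simp: T1_def\<close>)
qed

theorem proposition4p19:
  fixes ar :: "'l \<Rightarrow> enat" and sem :: "'m \<Rightarrow> ('l, unit) tree set"
  assumes "\<forall>om. sem om \<subseteq> T1 ar"
    and "upwards_closed ar sem"
    and "strongly_decomposable ar sem"
  shows "decomposable ar sem"
  unfolding decomposable_def
proof (intro allI impI)
  fix r r' assume wr: "wft ar (T1 ar) r" and wr': "wft ar (T1 ar) r'" and pre: "tt_pre ar sem r r'"
  have transfer: "r' \<in> mod_set ar sem (T1 ar) om D"
    if "D \<in> formula_den ar sem" and "r \<in> mod_set ar sem (T1 ar) om D" for om D
    using pre that unfolding tt_pre_def by blast
  show "formula_pre ar sem (mu r) (mu r')"
  proof (rule formula_preI)
    show "wft ar UNIV (mu r')"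
      using wr' by (simp add: T1_def wft_mu)
    show "mu r' \<in> mod_set ar sem UNIV om {()}" if "mu r \<in> mod_set ar sem UNIV om {()}" for om
      by (rule strongly_decomposable_transfer_top[OF assms(3) wr wr' _ that])
        (rule transfer[OF formula_den.fd_top])
    show "mu r' \<in> mod_set ar sem UNIV om {}" if "mu r \<in> mod_set ar sem UNIV om {}" for om
      by (rule strongly_decomposable_transfer_bot[OF assms(3) wr wr' _ that])
        (rule transfer[OF formula_den.fd_bot])
  qed
qed

end
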